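(* Suppose $n=3$. Then $x\sigma(x)+\sigma(x)\sigma^2(x)+\sigma^2(x)x=0$ and $N_\mathbb{K}(x+\sigma(x))=-N_\mathbb{K}(x)$.
   Context: Let $n=3$ and $p$ a prime with $p\equiv 1 \pmod 3$. Let $\zeta_p=e^{2\pi i/p}$, let $r$ be a primitive root modulo $p$, and let $\sigma$ be the automorphism of $\mathbb{Q}(\zeta_p)$ with $\sigma(\zeta_p)=\zeta_p^r$. Let $\mathbb{K}=\{y\in\mathbb{Q}(\zeta_p):\sigma^3(y)=y\}$, a cubic field. Let $\alpha=\prod_{j=0}^{(p-3)/2}(1-\zeta_p^{r^j})$, $\lambda$ an integer with $\lambda(r-1)\equiv1\pmod p$, $z=\zeta_p^{\lambda}\alpha(1-\zeta_p)$, $x=\mathrm{Tr}_{\mathbb{Q}(\zeta_p)/\mathbb{K}}(z)=\sum_{j=1}^{(p-1)/3}\sigma^{3j}(z)$. $N_\mathbb{K}$ is the norm from $\mathbb{K}$ to $\mathbb{Q}$. *)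

theory Defs
  imports Complex_Main "HOL-Number_Theory.Number_Theory"
begin

definition zeta_pow :: "nat \<Rightarrow> int \<Rightarrow> complex" where
  "zeta_pow p k = cis (2 * pi * of_int k / of_nat p)"

text \<open>Image of z = zeta^lam * alpha * (1 - zeta) under the automorphism zeta -> zeta^a of Q(zeta_p),
  where alpha = prod_{j=0}^{(p-3)/2} (1 - zeta^(r^j)).  For a = r^k this is sigma^k(z).\<close>
definition z_conj :: "nat \<Rightarrow> nat \<Rightarrow> int \<Rightarrow> int \<Rightarrow> complex" where
  "z_conj p r lam a =
     zeta_pow p (lam * a)
     * (\<Prod>j\<in>{0..(p - 3) div 2}. (1 - zeta_pow p (a * int r ^ j)))
     * (1 - zeta_pow p a)"

text \<open>sigma^i(x), where x = Tr_{Q(zeta_p)/K}(z) = sum_{j=1}^{(p-1)/3} sigma^(3j)(z).\<close>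
definition x_conj :: "nat \<Rightarrow> nat \<Rightarrow> int \<Rightarrow> nat \<Rightarrow> complex" where
  "x_conj p r lam i = (\<Sum>j\<in>{1..(p - 1) div 3}. z_conj p r lam (int r ^ (3 * j + i)))"

text \<open>Norm N_K from the cyclic cubic field K to Q of an element y of K, given its
  conjugates f i = sigma^i(y) (i = 0,1,2): the product over Gal(K/Q) = {1, sigma, sigma^2}.\<close>
definition normK :: "(nat \<Rightarrow> complex) \<Rightarrow> complex" where
  "normK f = f 0 * f 1 * f 2"

end

(* Write z_n = \<sigma>\<^sup>n(z).  Applying \<sigma> shifts the product defining \<alpha> by one factor; since
   r^((p-1)/2) \<equiv> -1 and \<lambda>(r - 1) \<equiv> 1 this gives z_{n+1}(1 - \<zeta>^(r^n)) = -(1 - \<zeta>^(r^(n+1))) z_n,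
   hence z_n = (-1)^n (1 - \<zeta>^(r^n)) c for a constant c.  As (p-1)/3 is even, \<sigma>\<^sup>i(x) = -c Y_i
   with the signed periods Y_i = \<Sum> (-1)^n \<zeta>^(r^n) over n \<equiv> i (mod 3), n < p - 1.
   Filtering with a cube root of unity w gives 3 Y_i = A + w^(-i) B + w^(-2i) C, where A, B, C are
   the Gauss sums of the characters r^k \<mapsto> (-1)^k, (-w)^k, (-w^2)^k.  The relation
   g(\<chi>) g(\<chi>\<inverse>) = \<chi>(-1) p gives A^2 = BC, which is exactly Y_0 Y_1 + Y_1 Y_2 + Y_2 Y_0 = 0.
   The norm identity follows from (a+b)(b+c)(c+a) = (a+b+c)(ab+bc+ca) - abc. *)

theory Submission
  imports Defs "HOL-Library.Real_Mod"
begin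

section \<open>Roots of unity\<close>

lemma zeta_pow_add: "zeta_pow p (a + b) = zeta_pow p a * zeta_pow p b"
  unfolding zeta_pow_def by (simp add: cis_mult add_divide_distrib distrib_left)

lemma zeta_pow_0 [simp]: "zeta_pow p 0 = 1"
  unfolding zeta_pow_def by simp

lemma zeta_pow_uminus: "zeta_pow p (- a) * zeta_pow p a = 1"
  using zeta_pow_add[of p "- a" a] by simp

lemma zeta_pow_power: "zeta_pow p a ^ n = zeta_pow p (a * int n)"
  unfolding zeta_pow_def DeMoivre by (simp add: algebra_simps)

lemma zeta_pow_mult_self: "p > 0 \<Longrightarrow> zeta_pow p (int p * k) = 1"
  unfolding zeta_pow_def using cis_multiple_2pi[of "of_int k"] by (simp add: mult.assoc)

lemma zeta_pow_cong:
  assumes "p > 0" "[a = b] (mod int p)" shows "zeta_pow p a = zeta_pow p b"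
proof -
  obtain k where "a = b + int p * k"
    using assms(2) by (metis cong_iff_lin cong_sym)
  then show ?thesis
    using zeta_pow_add[of p b "int p * k"] zeta_pow_mult_self[OF assms(1)] by simp
qed

lemma zeta_pow_eq_1_imp_dvd:
  assumes "p > 0" "zeta_pow p a = 1" shows "int p dvd a"
proof -
  obtain n where "2 * pi * of_int a / real p = of_int n * (2 * pi)"
    using assms(2) unfolding zeta_pow_def cis_eq_1_iff by blast
  then have "real_of_int a = real_of_int n * real p"
    using assms(1) by (simp add: field_simps)
  then have "a = n * int p"
    by (metis of_int_eq_iff of_int_mult of_int_of_nat_eq)
  then show ?thesis by simp
qed

lemma sum_zeta_pow_lessThan:
  assumes "p > 1" shows "(\<Sum>k<p. zeta_pow p (int k)) = 0"
proof -
  have "zeta_pow p 1 \<noteq> 1"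
    using zeta_pow_eq_1_imp_dvd[of p 1] assms by auto
  then have "(\<Sum>k<p. zeta_pow p 1 ^ k) = (zeta_pow p 1 ^ p - 1) / (zeta_pow p 1 - 1)"
    by (rule geometric_sum)
  moreover have "zeta_pow p 1 ^ p = 1"
    using zeta_pow_mult_self[of p 1] assms by (simp add: zeta_pow_power)
  ultimately show ?thesis by (simp add: zeta_pow_power)
qed

lemma power_mod_eq_power: "(w :: 'a :: monoid_mult) ^ N = 1 \<Longrightarrow> w ^ (x mod N) = w ^ x"
  by (metis div_mult_mod_eq power_add power_mult power_one mult_1 mult.commute)

lemma sum_rotate_mod:
  fixes l N :: nat
  assumes "l < N" shows "(\<Sum>k<N. g k) = (\<Sum>t<N. g ((l + t) mod N))"
proof -
  have inj: "inj_on (\<lambda>t. (l + t) mod N) {..<N}"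
  proof
    fix a b assume "a \<in> {..<N}" "b \<in> {..<N}" "(l + a) mod N = (l + b) mod N"
    then have "[a = b] (mod N)" "a < N" "b < N"
      using cong_add_lcancel_nat by (auto simp: cong_def)
    then show "a = b" by (simp add: cong_def)
  qed
  moreover have "(\<lambda>t. (l + t) mod N) ` {..<N} \<subseteq> {..<N}" using assms by auto
  ultimately have "(\<lambda>t. (l + t) mod N) ` {..<N} = {..<N}"
    using card_subset_eq[of "{..<N}"] card_image by (metis finite_lessThan)
  with inj have "bij_betw (\<lambda>t. (l + t) mod N) {..<N} {..<N}"
    by (simp add: bij_betw_def)
  then show ?thesis by (rule sum.reindex_bij_betw[symmetric])
qed

lemma sum_neg_one_power_even: "(\<Sum>j\<in>{1..2 * q}. (-1 :: 'a :: comm_ring_1) ^ j) = 0"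
  by (induction q) (simp_all add: numeral_eq_Suc)

lemma cube_root_unity_cube:
  fixes w :: "'a :: comm_ring_1" assumes "w\<^sup>2 + w + 1 = 0" shows "w ^ 3 = 1"
proof -
  have "w ^ 3 - 1 = (w - 1) * (w\<^sup>2 + w + 1)"
    by (simp add: algebra_simps power2_eq_square power3_eq_cube)
  with assms show ?thesis by simp
qed

lemma cube_root_unity_sum_powers:
  fixes w :: "'a :: comm_ring_1" assumes "w\<^sup>2 + w + 1 = 0"
  shows "1 + w ^ n + w ^ (2 * n) = (if 3 dvd n then 3 else 0)"
proof -
  have w3: "w ^ 3 = 1" using assms by (rule cube_root_unity_cube)
  have pow: "w ^ n = w ^ (n mod 3)" "w ^ (2 * n) = w ^ ((2 * n) mod 3)"
    using power_mod_eq_power[OF w3] by simp_all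
  have "n mod 3 = 0 \<or> n mod 3 = 1 \<or> n mod 3 = 2" by arith
  moreover have "(2 * n) mod 3 = (2 * (n mod 3)) mod 3" by (simp add: mod_mult_right_eq)
  ultimately consider "n mod 3 = 0" "(2 * n) mod 3 = 0" | "n mod 3 = 1" "(2 * n) mod 3 = 2"
    | "n mod 3 = 2" "(2 * n) mod 3 = 1"
    by force
  then show ?thesis
    by cases (use assms in \<open>simp_all add: pow dvd_eq_mod_eq_0 add_ac\<close>)
qed

lemma sum_residue_class_mod_3:
  fixes i k :: nat assumes "i < 3"
  shows "(\<Sum>n<3 * k. if n mod 3 = i then f n else 0) = (\<Sum>j<k. f (3 * j + i))"
proof (induction k)
  case (Suc k)
  let ?g = "\<lambda>n. if n mod 3 = i then f n else 0"
  have "3 * Suc k = Suc (Suc (Suc (3 * k)))" by simp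
  then have "(\<Sum>n<3 * Suc k. ?g n) = (\<Sum>n<3 * k. ?g n) + (?g (3 * k) + ?g (Suc (3 * k)) + ?g (Suc (Suc (3 * k))))"
    by (simp only: sum.lessThan_Suc add.assoc)
  also have "?g (3 * k) + ?g (Suc (3 * k)) + ?g (Suc (Suc (3 * k))) = f (3 * k + i)"
  proof -
    have "(3 * k) mod 3 = 0" "Suc (3 * k) mod 3 = 1" "Suc (Suc (3 * k)) mod 3 = 2"
      by presburger+
    moreover have "i = 0 \<or> i = 1 \<or> i = 2" using assms by arith
    ultimately show ?thesis by auto
  qed
  finally show ?case using Suc.IH by simp
qed simp

lemma sum_residue_class_mod_3_cube_roots:
  fixes w :: "'a :: comm_ring_1" and i k :: nat
  assumes "w\<^sup>2 + w + 1 = 0" "i < 3"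
  shows "(\<Sum>n<3 * k. f n * (1 + w ^ (n + 3 - i) + w ^ (2 * (n + 3 - i))))
           = 3 * (\<Sum>j<k. f (3 * j + i))"
proof -
  have "3 dvd n + 3 - i \<longleftrightarrow> n mod 3 = i" for n
    using assms(2) by presburger
  then have "(\<Sum>n<3 * k. f n * (1 + w ^ (n + 3 - i) + w ^ (2 * (n + 3 - i))))
      = (\<Sum>n<3 * k. 3 * (if n mod 3 = i then f n else 0))"
    by (intro sum.cong refl) (simp add: cube_root_unity_sum_powers[OF assms(1)])
  then show ?thesis
    by (simp only: sum_distrib_left[symmetric] sum_residue_class_mod_3[OF assms(2)])
qed

lemma ex_cube_root_unity: "\<exists>w :: complex. w\<^sup>2 + w + 1 = 0"
  by (rule exI[of _ "Complex (-1/2) (sqrt 3 / 2)"]) (simp add: complex_eq_iff power2_eq_square)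

lemma sym2_eq_0_if_square_eq_prod:
  fixes A B C y0 y1 y2 w :: complex
  assumes "w\<^sup>2 + w + 1 = 0"
    and "3 * y0 = A + B + C" "3 * y1 = A + w\<^sup>2 * B + w * C" "3 * y2 = A + w * B + w\<^sup>2 * C"
    and "A * A = B * C"
  shows "y0 * y1 + y1 * y2 + y2 * y0 = 0"
proof -
  have "9 * (y0 * y1 + y1 * y2 + y2 * y0)
      = (3 * y0) * (3 * y1) + (3 * y1) * (3 * y2) + (3 * y2) * (3 * y0)"
    by (simp add: algebra_simps)
  also have "\<dots> = 3 * (A * A - B * C) + (w\<^sup>2 + w + 1) *
      (2 * A * B + 2 * A * C + w * B * B + w * C * C + (3 + w\<^sup>2 - w) * B * C)"
    unfolding assms(2-4) by (simp add: algebra_simps power2_eq_square)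
  also have "\<dots> = 0" using assms(1,5) by simp
  finally show ?thesis by (metis mult_eq_0_iff zero_neq_numeral)
qed

lemma prod_pair_sums_eq_neg_prod:
  fixes x0 x1 x2 :: "'a :: comm_ring_1"
  assumes "x0 * x1 + x1 * x2 + x2 * x0 = 0"
  shows "(x0 + x1) * (x1 + x2) * (x2 + x0) = - (x0 * x1 * x2)"
proof -
  have "(x0 + x1) * (x1 + x2) * (x2 + x0)
      = (x0 + x1 + x2) * (x0 * x1 + x1 * x2 + x2 * x0) - x0 * x1 * x2"
    by (simp add: algebra_simps)
  with assms show ?thesis by simp
qed

section \<open>Gauss sums over a primitive root\<close>

locale odd_prime_primroot =
  fixes p r :: nat
  assumes prime: "prime p" and odd: "odd p" and primroot: "residue_primroot p r"
begin

lemma gt_1: "p > 1"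
  using prime prime_gt_1_nat by blast

lemma coprime_r: "coprime p r"
  using primroot by (simp add: residue_primroot_def)

lemma power_cong_iff: "[r ^ a = r ^ b] (mod p) \<longleftrightarrow> [a = b] (mod (p - 1))"
  using order_divides_expdiff[OF coprime_r] primroot prime
  by (simp add: residue_primroot_def totient_prime)

lemma not_dvd_power: "\<not> p dvd r ^ k"
proof
  assume "p dvd r ^ k"
  then have "p dvd r" using prime prime_dvd_power by blast
  then show False using coprime_common_divisor[OF coprime_r dvd_refl] gt_1 by auto
qed

lemma zeta_pow_power_cong:
  assumes "[a = b] (mod (p - 1))" shows "zeta_pow p (int r ^ a) = zeta_pow p (int r ^ b)"
proof (rule zeta_pow_cong)
  have "[r ^ a = r ^ b] (mod p)" using assms power_cong_iff by blast
  then show "[int r ^ a = int r ^ b] (mod int p)" using cong_int_iff[of "r ^ a" "r ^ b" p] by simp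
qed (use gt_1 in simp)

text \<open>The powers \<open>c r\<^sup>l\<close>, \<open>l < p - 1\<close>, run through all nonzero residues modulo \<open>p\<close>.\<close>
lemma sum_zeta_pow_orbit:
  assumes "\<not> p dvd c" shows "(\<Sum>l<p-1. zeta_pow p (int c * int r ^ l)) = -1"
proof -
  define f where "f l = (c * r ^ l) mod p" for l
  have "coprime p c" using assms prime by (simp add: prime_imp_coprime)
  have inj: "inj_on f {..<p-1}"
  proof
    fix a b assume "a \<in> {..<p-1}" "b \<in> {..<p-1}" "f a = f b"
    from \<open>f a = f b\<close> have "[c * r ^ a = c * r ^ b] (mod p)"
      by (simp add: f_def cong_def)
    then have "[r ^ a = r ^ b] (mod p)"
      using \<open>coprime p c\<close> by (metis cong_mult_lcancel_nat coprime_commute)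
    then have "[a = b] (mod (p - 1))" by (simp only: power_cong_iff)
    with \<open>a \<in> {..<p-1}\<close> \<open>b \<in> {..<p-1}\<close> show "a = b" by (simp add: cong_def)
  qed
  have "f ` {..<p-1} \<subseteq> {1..<p}"
  proof
    fix y assume "y \<in> f ` {..<p-1}"
    then obtain l where y: "y = f l" by auto
    have "\<not> p dvd c * r ^ l" using assms not_dvd_power prime by (simp add: prime_dvd_mult_iff)
    then show "y \<in> {1..<p}" using gt_1 by (simp add: y f_def dvd_eq_mod_eq_0)
  qed
  then have image: "f ` {..<p-1} = {1..<p}"
    using card_subset_eq card_image[OF inj] by (metis card_atLeastLessThan card_lessThan finite_atLeastLessThan)
  have "(\<Sum>l<p-1. zeta_pow p (int c * int r ^ l)) = (\<Sum>l<p-1. zeta_pow p (int (f l)))"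
    using gt_1 by (intro sum.cong refl zeta_pow_cong) (simp_all add: f_def cong_def of_nat_mod)
  also have "\<dots> = (\<Sum>k\<in>{1..<p}. zeta_pow p (int k))"
    using sum.reindex[OF inj, of "\<lambda>k. zeta_pow p (int k)"] image by simp
  also have "\<dots> = (\<Sum>k<p. zeta_pow p (int k)) - 1"
  proof -
    have "{..<p} = insert 0 {1..<p}" using gt_1 by auto
    then show ?thesis by simp
  qed
  finally show ?thesis using sum_zeta_pow_lessThan[OF gt_1] by simp
qed

definition h :: nat where "h = (p - 1) div 2"

lemma p_minus_1_eq_2h: "p - 1 = 2 * h" and h_pos: "0 < h" and h_less: "h < p - 1"
  using odd gt_1 unfolding h_def by presburger+

lemma power_h_cong: "[int r ^ h = -1] (mod int p)"
proof -
  have "[r ^ (p - 1) = r ^ 0] (mod p)"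
    by (subst power_cong_iff) (simp add: cong_def)
  then have "[r ^ (2 * h) = r ^ 0] (mod p)"
    by (simp only: p_minus_1_eq_2h)
  then have "int p dvd int r ^ (2 * h) - 1"
    using cong_int_iff[of "r ^ (2 * h)" "r ^ 0" p] by (simp add: cong_iff_dvd_diff)
  then have "int p dvd (int r ^ h - 1) * (int r ^ h + 1)"
    by (simp add: power_mult power2_eq_square algebra_simps)
  moreover have "\<not> int p dvd int r ^ h - 1"
  proof
    assume "int p dvd int r ^ h - 1"
    then have "[r ^ h = r ^ 0] (mod p)"
      using cong_int_iff[of "r ^ h" "r ^ 0" p] by (simp add: cong_iff_dvd_diff)
    then have "[h = 0] (mod (p - 1))" by (simp only: power_cong_iff)
    then show False using h_pos h_less by (simp add: cong_def)
  qed
  ultimately have "int p dvd int r ^ h + 1"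
    using prime by (simp add: prime_dvd_mult_iff)
  then show ?thesis by (simp add: cong_iff_dvd_diff)
qed

text \<open>For \<open>w\<^bsup>p-1\<^esup> = 1\<close> this is the Gauss sum of the character \<open>\<chi>(r\<^sup>k) = w\<^sup>k\<close>.\<close>
definition gauss_sum :: "complex \<Rightarrow> complex" where
  "gauss_sum w = (\<Sum>k<p-1. w ^ k * zeta_pow p (int r ^ k))"

text \<open>Only \<open>r\<^sup>h \<equiv> -1\<close> makes \<open>r\<^sup>t + 1\<close> divisible by \<open>p\<close>.\<close>
lemma sum_zeta_pow_orbit_shift:
  assumes "t < p - 1"
  shows "(\<Sum>l<p-1. zeta_pow p ((int r ^ t + 1) * int r ^ l))
           = (if t = h then of_nat (p - 1) else -1)"
proof (cases "t = h")
  case True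
  have "int p dvd int r ^ h + 1" using power_h_cong by (simp add: cong_iff_dvd_diff)
  then have "[(int r ^ t + 1) * int r ^ l = 0] (mod int p)" for l
    using True by (simp add: cong_0_iff)
  then have "zeta_pow p ((int r ^ t + 1) * int r ^ l) = 1" for l
    using zeta_pow_cong[of p _ 0] gt_1 by simp
  with True show ?thesis by simp
next
  case False
  have "\<not> p dvd r ^ t + 1"
  proof
    assume "p dvd r ^ t + 1"
    then have "int p dvd int r ^ t + 1"
      by (metis of_nat_1 of_nat_add of_nat_dvd_iff of_nat_power)
    then have "[int r ^ t = -1] (mod int p)"
      by (simp add: cong_iff_dvd_diff)
    then have "[int r ^ t = int r ^ h] (mod int p)"
      using power_h_cong by (meson cong_sym cong_trans)
    then have "[r ^ t = r ^ h] (mod p)"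
      using cong_int_iff[of "r ^ t" "r ^ h" p] by simp
    then have "[t = h] (mod (p - 1))" by (simp only: power_cong_iff)
    then show False using assms h_less False by (simp add: cong_def)
  qed
  then have "(\<Sum>l<p-1. zeta_pow p (int (r ^ t + 1) * int r ^ l)) = -1"
    by (rule sum_zeta_pow_orbit)
  moreover have "int (r ^ t + 1) = int r ^ t + 1" by simp
  ultimately show ?thesis using False by (simp only: if_False)
qed

lemma gauss_sum_mult_eq:
  assumes "w ^ (p - 1) = 1"
  shows "gauss_sum w * gauss_sum (inverse w)
           = (\<Sum>t<p-1. w ^ t * (\<Sum>l<p-1. zeta_pow p ((int r ^ t + 1) * int r ^ l)))"
proof -
  define N where "N = p - 1"
  have "w \<noteq> 0" using assms gt_1 by (auto simp: power_0_left)
  have shift: "w ^ ((l + t) mod N) * inverse w ^ l * zeta_pow p (int r ^ ((l + t) mod N) + int r ^ l)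
      = w ^ t * zeta_pow p ((int r ^ t + 1) * int r ^ l)" for l t
  proof -
    have "w ^ ((l + t) mod N) * inverse w ^ l = w ^ t"
      using assms \<open>w \<noteq> 0\<close> by (simp add: N_def power_mod_eq_power power_add power_inverse)
    moreover have "zeta_pow p (int r ^ ((l + t) mod N)) = zeta_pow p (int r ^ (l + t))"
      by (rule zeta_pow_power_cong) (simp add: N_def cong_def)
    moreover have "(int r ^ t + 1) * int r ^ l = int r ^ (l + t) + int r ^ l"
      by (simp add: power_add algebra_simps)
    ultimately show ?thesis
      by (simp only: zeta_pow_add)
  qed
  have "gauss_sum w * gauss_sum (inverse w)
      = (\<Sum>l<N. \<Sum>k<N. w ^ k * inverse w ^ l * zeta_pow p (int r ^ k + int r ^ l))"
    unfolding gauss_sum_def N_def sum_product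
    by (subst sum.swap) (simp add: zeta_pow_add algebra_simps)
  also have "\<dots> = (\<Sum>l<N. \<Sum>t<N. w ^ t * zeta_pow p ((int r ^ t + 1) * int r ^ l))"
  proof (rule sum.cong[OF refl])
    fix l assume "l \<in> {..<N}"
    then show "(\<Sum>k<N. w ^ k * inverse w ^ l * zeta_pow p (int r ^ k + int r ^ l))
        = (\<Sum>t<N. w ^ t * zeta_pow p ((int r ^ t + 1) * int r ^ l))"
      by (subst sum_rotate_mod[of l]) (simp_all add: shift)
  qed
  also have "\<dots> = (\<Sum>t<N. w ^ t * (\<Sum>l<N. zeta_pow p ((int r ^ t + 1) * int r ^ l)))"
    by (subst sum.swap) (simp add: sum_distrib_left)
  finally show ?thesis unfolding N_def .
qed

lemma gauss_sum_mult_inverse: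
  assumes "w ^ (p - 1) = 1" and "w \<noteq> 1"
  shows "gauss_sum w * gauss_sum (inverse w) = w ^ h * of_nat p"
proof -
  have "gauss_sum w * gauss_sum (inverse w)
      = (\<Sum>t<p-1. - (w ^ t) + (if t = h then w ^ t * of_nat p else 0))"
    unfolding gauss_sum_mult_eq[OF assms(1)]
  proof (intro sum.cong refl)
    fix t assume "t \<in> {..<p-1}"
    then show "w ^ t * (\<Sum>l<p-1. zeta_pow p ((int r ^ t + 1) * int r ^ l))
        = - (w ^ t) + (if t = h then w ^ t * of_nat p else 0)"
      using gt_1 by (subst sum_zeta_pow_orbit_shift) (auto simp: algebra_simps of_nat_diff)
  qed
  also have "\<dots> = - (\<Sum>t<p-1. w ^ t) + w ^ h * of_nat p"
    using h_less by (simp only: sum.distrib sum_negf) simp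
  also have "(\<Sum>t<p-1. w ^ t) = 0"
    using geometric_sum[OF assms(2), of "p - 1"] assms(1) by simp
  finally show ?thesis by simp
qed

end

section \<open>The conjugates of \<open>x\<close>\<close>

locale cubic_setting = odd_prime_primroot +
  fixes lam :: int
  assumes p_mod_3: "p mod 3 = 1" and lam_cong: "[lam * (int r - 1) = 1] (mod int p)"
begin

definition m :: nat where "m = (p - 1) div 3"

lemma p_minus_1_eq_3m: "p - 1 = 3 * m"
  unfolding m_def using p_mod_3 gt_1 by presburger

lemma m_h_multiples:
  obtains q where "m = 2 * q" and "h = 3 * q"
proof -
  have "even m" using p_minus_1_eq_2h p_minus_1_eq_3m by presburger
  then obtain q where "m = 2 * q" by blast
  moreover from this have "h = 3 * q" using p_minus_1_eq_2h p_minus_1_eq_3m by simp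
  ultimately show thesis by (rule that)
qed

abbreviation zeta_r :: "nat \<Rightarrow> complex" where
  "zeta_r n \<equiv> zeta_pow p (int r ^ n)"

abbreviation sigma_z :: "nat \<Rightarrow> complex" where
  "sigma_z n \<equiv> z_conj p r lam (int r ^ n)"

lemma one_minus_zeta_r_nonzero: "1 - zeta_r n \<noteq> 0"
proof
  assume "1 - zeta_r n = 0"
  then have "int p dvd int r ^ n" using zeta_pow_eq_1_imp_dvd gt_1 by simp
  then have "p dvd r ^ n" by (metis of_nat_dvd_iff of_nat_power)
  then show False using not_dvd_power by blast
qed

lemma sigma_z_eq_prod:
  "sigma_z n = zeta_pow p (lam * int r ^ n) * (\<Prod>j\<in>{0..h-1}. (1 - zeta_r (n + j))) * (1 - zeta_r n)"
proof -
  have "(p - 3) div 2 = h - 1" unfolding h_def using gt_1 by simp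
  then show ?thesis unfolding z_conj_def by (simp add: power_add)
qed

lemma prod_one_minus_zeta_r_shift:
  "(\<Prod>j\<in>{0..h-1}. (1 - zeta_r (Suc n + j))) * (1 - zeta_r n)
     = (\<Prod>j\<in>{0..h-1}. (1 - zeta_r (n + j))) * (1 - zeta_r (n + h))"
proof -
  obtain k where k: "h = Suc k" using h_pos by (cases h) auto
  have "(\<Prod>j\<in>{0..h}. (1 - zeta_r (n + j))) = (1 - zeta_r n) * (\<Prod>j\<in>{0..k}. (1 - zeta_r (n + Suc j)))"
    unfolding k prod.atLeast0_atMost_Suc_shift by (simp add: comp_def)
  moreover have "(\<Prod>j\<in>{0..h}. (1 - zeta_r (n + j))) = (\<Prod>j\<in>{0..k}. (1 - zeta_r (n + j))) * (1 - zeta_r (n + Suc k))"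
    unfolding k by (rule prod.atLeast0_atMost_Suc)
  ultimately show ?thesis using k by (simp add: mult.commute)
qed

lemma zeta_r_add_h: "zeta_r (n + h) = zeta_pow p (- (int r ^ n))"
proof (rule zeta_pow_cong)
  have "[int r ^ n * int r ^ h = int r ^ n * (-1)] (mod int p)"
    using power_h_cong by (rule cong_scalar_left)
  then show "[int r ^ (n + h) = - (int r ^ n)] (mod int p)" by (simp add: power_add)
qed (use gt_1 in simp)

lemma zeta_pow_lam_Suc: "zeta_pow p (lam * int r ^ Suc n) = zeta_pow p (lam * int r ^ n) * zeta_r n"
proof -
  have "[lam * int r ^ n + lam * (int r - 1) * int r ^ n = lam * int r ^ n + 1 * int r ^ n] (mod int p)"
    using lam_cong by (intro cong_add cong_refl cong_scalar_right)
  then have "zeta_pow p (lam * int r ^ Suc n) = zeta_pow p (lam * int r ^ n + int r ^ n)"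
    using gt_1 by (intro zeta_pow_cong) (simp_all add: algebra_simps)
  then show ?thesis by (simp add: zeta_pow_add)
qed

lemma sigma_z_Suc: "sigma_z (Suc n) * (1 - zeta_r n) = - (1 - zeta_r (Suc n)) * sigma_z n"
proof -
  define A where "A = zeta_pow p (lam * int r ^ n)"
  define P where "P = (\<Prod>j\<in>{0..h-1}. (1 - zeta_r (n + j)))"
  have "sigma_z (Suc n) * (1 - zeta_r n)
      = A * zeta_r n * ((\<Prod>j\<in>{0..h-1}. (1 - zeta_r (Suc n + j))) * (1 - zeta_r n)) * (1 - zeta_r (Suc n))"
    unfolding sigma_z_eq_prod[of "Suc n"] zeta_pow_lam_Suc A_def by (simp add: algebra_simps)
  also have "\<dots> = A * P * (zeta_r n * (1 - zeta_pow p (- (int r ^ n)))) * (1 - zeta_r (Suc n))"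
    unfolding prod_one_minus_zeta_r_shift zeta_r_add_h P_def by (simp add: algebra_simps)
  also have "zeta_r n * (1 - zeta_pow p (- (int r ^ n))) = - (1 - zeta_r n)"
    using zeta_pow_uminus[of p "int r ^ n"] by (simp add: algebra_simps)
  finally show ?thesis unfolding sigma_z_eq_prod[of n] A_def P_def by (simp add: algebra_simps)
qed

definition z_scale :: complex where "z_scale = sigma_z 0 / (1 - zeta_r 0)"

lemma sigma_z_eq: "sigma_z n = (-1) ^ n * (1 - zeta_r n) * z_scale"
proof (induction n)
  case 0
  then show ?case using one_minus_zeta_r_nonzero[of 0] unfolding z_scale_def by simp
next
  case (Suc n)
  have "sigma_z (Suc n) = - (1 - zeta_r (Suc n)) * sigma_z n / (1 - zeta_r n)"
    using sigma_z_Suc[of n] one_minus_zeta_r_nonzero[of n] by (simp add: field_simps)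
  also have "\<dots> = (-1) ^ Suc n * (1 - zeta_r (Suc n)) * z_scale"
    unfolding Suc using one_minus_zeta_r_nonzero[of n] by (simp add: field_simps)
  finally show ?case .
qed

definition signed_period :: "nat \<Rightarrow> complex" where
  "signed_period i = (\<Sum>j<m. (-1) ^ (3 * j + i) * zeta_r (3 * j + i))"

lemma signed_period_shift:
  "(\<Sum>j\<in>{1..m}. (-1) ^ (3 * j + i) * zeta_r (3 * j + i)) = signed_period i"
proof -
  define g where "g j = (-1 :: complex) ^ (3 * j + i) * zeta_r (3 * j + i)" for j
  obtain q where "m = 2 * q" "h = 3 * q" by (rule m_h_multiples)
  then have "(-1 :: complex) ^ (3 * m + i) = (-1) ^ i" by (simp add: power_add)
  moreover have "zeta_r (3 * m + i) = zeta_r i"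
    using p_minus_1_eq_3m by (intro zeta_pow_power_cong) (simp add: cong_def)
  ultimately have "g m = g 0" by (simp add: g_def)
  moreover have "(\<Sum>j<m. g (Suc j)) + g 0 = (\<Sum>j<m. g j) + g m"
    using sum.lessThan_Suc_shift[of g m] sum.lessThan_Suc[of g m] by (simp add: add.commute)
  ultimately have "(\<Sum>j<m. g (Suc j)) = (\<Sum>j<m. g j)" by simp
  then show ?thesis
    unfolding signed_period_def g_def[symmetric] by (simp add: sum.atLeast1_atMost_eq)
qed

lemma x_conj_eq: "x_conj p r lam i = - z_scale * signed_period i"
proof -
  have "((-1 :: complex) ^ j) ^ 3 = (-1) ^ j" for j by (cases "even j") simp_all
  then have "x_conj p r lam i = (\<Sum>j\<in>{1..m}. (-1) ^ i * (-1) ^ j * z_scale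
      - (-1) ^ (3 * j + i) * zeta_r (3 * j + i) * z_scale)"
    unfolding x_conj_def m_def[symmetric] sigma_z_eq
    by (intro sum.cong refl) (simp add: power_add power_mult algebra_simps)
  also have "\<dots> = (-1) ^ i * z_scale * (\<Sum>j\<in>{1..m}. (-1) ^ j) - z_scale * signed_period i"
    unfolding signed_period_shift[symmetric]
    by (simp add: sum_subtractf sum_distrib_left sum_distrib_right algebra_simps)
  also have "(\<Sum>j\<in>{1..m}. (-1 :: complex) ^ j) = 0"
  proof -
    obtain q where "m = 2 * q" "h = 3 * q" by (rule m_h_multiples)
    then show ?thesis by (simp only: sum_neg_one_power_even)
  qed
  finally show ?thesis by simp
qed

lemma signed_period_3: "signed_period 3 = signed_period 0"
proof -
  have "signed_period 3 = (\<Sum>j<m. (-1) ^ (3 * Suc j + 0) * zeta_r (3 * Suc j + 0))"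
    unfolding signed_period_def by (simp add: add.commute)
  also have "\<dots> = signed_period 0"
    using signed_period_shift[of 0] by (simp add: sum.atLeast1_atMost_eq)
  finally show ?thesis .
qed

lemma three_signed_period_eq:
  assumes w: "w\<^sup>2 + w + 1 = 0" and "i < 3"
  shows "3 * signed_period i
           = gauss_sum (-1) + w ^ (3 - i) * gauss_sum (- w) + w ^ (2 * (3 - i)) * gauss_sum (- w\<^sup>2)"
proof -
  have "3 * signed_period i
      = (\<Sum>n<3 * m. ((-1) ^ n * zeta_r n) * (1 + w ^ (n + 3 - i) + w ^ (2 * (n + 3 - i))))"
    unfolding signed_period_def using sum_residue_class_mod_3_cube_roots[OF assms] by simp
  also have "\<dots> = (\<Sum>n<p-1. (-1) ^ n * zeta_r n + w ^ (3 - i) * ((- w) ^ n * zeta_r n)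
      + w ^ (2 * (3 - i)) * ((- w\<^sup>2) ^ n * zeta_r n))"
  proof (rule sum.cong)
    fix n
    have "n + 3 - i = n + (3 - i)" using assms(2) by simp
    moreover have "w ^ (2 * (n + (3 - i))) = (w\<^sup>2) ^ n * w ^ (2 * (3 - i))"
      by (simp only: distrib_left power_add power_mult)
    ultimately show "(-1) ^ n * zeta_r n * (1 + w ^ (n + 3 - i) + w ^ (2 * (n + 3 - i)))
        = (-1) ^ n * zeta_r n + w ^ (3 - i) * ((- w) ^ n * zeta_r n)
          + w ^ (2 * (3 - i)) * ((- w\<^sup>2) ^ n * zeta_r n)"
      by (simp add: power_add power_minus[of w] power_minus[of "w\<^sup>2"] algebra_simps)
  qed (use p_minus_1_eq_3m in simp)
  also have "\<dots> = gauss_sum (-1) + w ^ (3 - i) * gauss_sum (- w) + w ^ (2 * (3 - i)) * gauss_sum (- w\<^sup>2)"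
    unfolding gauss_sum_def by (simp add: sum.distrib sum_distrib_left)
  finally show ?thesis .
qed

text \<open>Both sides equal \<open>\<chi>(-1) p\<close> by the Gauss sum relation, with \<open>\<chi>(-1) = (-1)\<^sup>h\<close>.\<close>
lemma gauss_sum_neg_one_square:
  assumes w: "w\<^sup>2 + w + 1 = 0"
  shows "gauss_sum (-1) * gauss_sum (-1) = gauss_sum (- w) * gauss_sum (- w\<^sup>2)"
proof -
  obtain q where q: "m = 2 * q" "h = 3 * q" by (rule m_h_multiples)
  have w3: "w ^ 3 = 1" using w by (rule cube_root_unity_cube)
  then have neg_w3: "(- w) ^ 3 = -1" by (simp add: power_minus[of w])
  have "p - 1 = 3 * (2 * q)" using p_minus_1_eq_3m q by simp
  then have "(-1 :: complex) ^ (p - 1) = 1" "(- w) ^ (p - 1) = 1"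
    by (simp_all only: power_mult neg_w3) simp_all
  moreover have "- w \<noteq> 1"
  proof
    assume "- w = 1"
    then have "w = -1" by (simp add: minus_equation_iff)
    with w show False by simp
  qed
  moreover have "inverse (- w) = - w\<^sup>2"
    using w3 by (intro inverse_unique) (simp add: power2_eq_square power3_eq_cube mult.assoc)
  ultimately have "gauss_sum (-1) * gauss_sum (-1) = (-1) ^ h * of_nat p"
    and "gauss_sum (- w) * gauss_sum (- w\<^sup>2) = (- w) ^ h * of_nat p"
    using gauss_sum_mult_inverse[of "-1"] gauss_sum_mult_inverse[of "- w"] by simp_all
  moreover have "(- w) ^ h = (-1 :: complex) ^ h"
    unfolding q power_mult neg_w3 by simp
  ultimately show ?thesis by simp
qed

lemma signed_period_sym2_eq_0:
  "signed_period 0 * signed_period 1 + signed_period 1 * signed_period 2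
     + signed_period 2 * signed_period 0 = 0"
proof -
  obtain w :: complex where w: "w\<^sup>2 + w + 1 = 0" using ex_cube_root_unity by blast
  have w3: "w ^ 3 = 1" using w by (rule cube_root_unity_cube)
  have w6: "w ^ 6 = 1"
    using w3 power_mult[of w 3 2] by simp
  have w4: "w ^ 4 = w"
    using w3 power_add[of w 3 1] by simp
  have "3 * signed_period 0 = gauss_sum (-1) + gauss_sum (- w) + gauss_sum (- w\<^sup>2)"
    using three_signed_period_eq[OF w, of 0] w3 w6 by simp
  moreover have "3 * signed_period 1 = gauss_sum (-1) + w\<^sup>2 * gauss_sum (- w) + w * gauss_sum (- w\<^sup>2)"
    using three_signed_period_eq[OF w, of 1] w4 by simp
  moreover have "3 * signed_period 2 = gauss_sum (-1) + w * gauss_sum (- w) + w\<^sup>2 * gauss_sum (- w\<^sup>2)"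
    using three_signed_period_eq[OF w, of 2] by simp
  ultimately show ?thesis
    using gauss_sum_neg_one_square[OF w] by (rule sym2_eq_0_if_square_eq_prod[OF w])
qed

lemma x_conj_sym2_eq_0:
  "x_conj p r lam 0 * x_conj p r lam 1 + x_conj p r lam 1 * x_conj p r lam 2
     + x_conj p r lam 2 * x_conj p r lam 0 = 0"
proof -
  have "x_conj p r lam 0 * x_conj p r lam 1 + x_conj p r lam 1 * x_conj p r lam 2
      + x_conj p r lam 2 * x_conj p r lam 0
      = z_scale\<^sup>2 * (signed_period 0 * signed_period 1 + signed_period 1 * signed_period 2
        + signed_period 2 * signed_period 0)"
    unfolding x_conj_eq by (simp add: algebra_simps power2_eq_square)
  then show ?thesis using signed_period_sym2_eq_0 by simp
qed

lemma x_conj_3: "x_conj p r lam 3 = x_conj p r lam 0"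
  unfolding x_conj_eq signed_period_3 ..

end

theorem mainTheorem9:
  fixes p r :: nat and lam :: int
  assumes "prime p" and "p mod 3 = 1"
    and "residue_primroot p r"
    and "[lam * (int r - 1) = 1] (mod int p)"
  shows "x_conj p r lam 0 * x_conj p r lam 1 + x_conj p r lam 1 * x_conj p r lam 2
           + x_conj p r lam 2 * x_conj p r lam 0 = 0 \<and>
         normK (\<lambda>i. x_conj p r lam i + x_conj p r lam (i + 1)) = - normK (x_conj p r lam)"
proof -
  have "p > 2"
    using prime_gt_1_nat[OF assms(1)] assms(2) by (cases "p = 2") auto
  then have "odd p" using assms(1) prime_odd_nat by blast
  with assms interpret cubic_setting p r lam
    by unfold_locales
  have "normK (\<lambda>i. x_conj p r lam i + x_conj p r lam (i + 1))
      = (x_conj p r lam 0 + x_conj p r lam 1) * (x_conj p r lam 1 + x_conj p r lam 2)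
        * (x_conj p r lam 2 + x_conj p r lam 0)"
  proof -
    have "(0 :: nat) + 1 = 1" "(1 :: nat) + 1 = 2" "(2 :: nat) + 1 = 3" by simp_all
    then show ?thesis unfolding normK_def by (simp only: x_conj_3)
  qed
  also have "\<dots> = - normK (x_conj p r lam)"
    unfolding normK_def by (rule prod_pair_sums_eq_neg_prod[OF x_conj_sym2_eq_0])
  finally show ?thesis using x_conj_sym2_eq_0 by simp
qed

end
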